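(* For all integers $n\ge 0$ and $\alpha\ge 0$, \[\overline{p}\big(4^{\alpha}(40n+35)\big)\equiv 0 \pmod{40}.\] In particular (case $\alpha=0$), $\overline{p}(40n+35)\equiv 0 \pmod{40}$ for all $n\ge 0$.
   Context: An overpartition of a nonnegative integer $n$ is a partition of $n$ in which the first occurrence of each distinct part may (or may not) be overlined; $\overline{p}(n)$ denotes the number of overpartitions of $n$ (with $\overline{p}(0)=1$). Equivalently, $\sum_{n\ge0}\overline{p}(n)q^n=\prod_{k\ge1}\frac{1+q^k}{1-q^k}$. *)

theory Defs
  imports Main "HOL-Library.Multiset"
begin

text \<open>An overpartition of n is a partition M of n together with the set S of
distinct parts whose first occurrence is overlined (S a subset of the parts).\<close>

definition overpartitions :: "nat \<Rightarrow> (nat multiset \<times> nat set) set" where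
  "overpartitions n = {(M, S). (\<forall>x\<in>#M. 0 < x) \<and> sum_mset M = n \<and> S \<subseteq> set_mset M}"

definition overpartition_count :: "nat \<Rightarrow> nat" where
  "overpartition_count n = card (overpartitions n)"

end

theory Submission
  imports Defs "HOL-Computational_Algebra.Formal_Power_Series" "HOL-Library.FuncSet"
begin

text \<open>By Gauss, the overpartition series is \<open>1/\<phi>(-q)\<close> with \<open>\<phi>(-q) = \<Sum> (-1)^j q^(j^2)\<close>, the sum
  over all integers \<open>j\<close>. This follows from the finite identity
  \<open>\<Sum>{|j| \<le> N} (-1)^j q^(j^2) (q^2;q^2)_N / ((q;q)_(N-j) (q;q)_(N+j)) = 1\<close>, which telescopes in \<open>N\<close>.

  Write \<open>\<phi>(-q) = 1 + 2Y\<close> with \<open>Y\<close> supported on the squares. As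
  \<open>(1 + 2Y)(1 - 2Y + 4Y^2) = 1 + 8Y^3\<close>, the overpartition series is \<open>1 - 2Y + 4Y^2\<close> modulo 8,
  so \<open>8\<close> divides the overpartition count \<open>p(N)\<close> whenever \<open>N > 0\<close> is not a sum of two squares.

  Modulo 5, \<open>\<phi>(-q)^5 \<equiv> \<phi>(-q^5)\<close>, so the overpartition series is \<open>\<phi>(-q)^4 / \<phi>(-q^5)\<close>. The
  coefficients of \<open>\<phi>(-q)^4\<close> are \<open>\<plusminus>r4(n)\<close>, and \<open>r4(5m) \<equiv> r4(m) (mod 5)\<close>: factoring integral
  quaternions of norm \<open>5m\<close> through the 48 quaternions of norm 5 counts each one not divisible
  by 5 exactly 8 times and each other one 48 times. Extracting the exponents divisible by 5
  therefore gives \<open>p(5m) \<equiv> [q^m] \<phi>(-q)^3 (mod 5)\<close>.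

  Finally \<open>4^\<alpha>(40n + 35) = 5m\<close> with \<open>m = 4^\<alpha>(8n + 7)\<close>; the former is not a sum of two squares
  and \<open>m\<close> is not a sum of three, so both congruences apply.\<close>

unbundle fps_syntax

definition fps_cong_upto :: "nat \<Rightarrow> 'a::comm_ring_1 \<Rightarrow> 'a fps \<Rightarrow> 'a fps \<Rightarrow> bool" where
  "fps_cong_upto T m f g \<longleftrightarrow> (\<forall>n<T. m dvd f $ n - g $ n)"

definition fps_cong :: "'a::comm_ring_1 \<Rightarrow> 'a fps \<Rightarrow> 'a fps \<Rightarrow> bool" where
  "fps_cong m f g \<longleftrightarrow> (\<forall>n. m dvd f $ n - g $ n)"

lemma fps_cong_iff_upto: "fps_cong m f g \<longleftrightarrow> (\<forall>T. fps_cong_upto T m f g)"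
  unfolding fps_cong_def fps_cong_upto_def by auto

lemma fps_cong_upto_0_iff: "fps_cong_upto T 0 f g \<longleftrightarrow> (\<forall>n<T. f $ n = g $ n)"
  by (simp add: fps_cong_upto_def)

lemma fps_cong_upto_refl [intro]: "fps_cong_upto T m f f"
  by (simp add: fps_cong_upto_def)

lemma fps_cong_upto_sym: "fps_cong_upto T m f g \<Longrightarrow> fps_cong_upto T m g f"
  unfolding fps_cong_upto_def by (metis dvd_minus_iff minus_diff_eq)

lemma fps_cong_upto_trans:
  assumes "fps_cong_upto T m f g" "fps_cong_upto T m g h"
  shows "fps_cong_upto T m f h"
  unfolding fps_cong_upto_def
proof (intro allI impI)
  fix n assume "n < T"
  then have "m dvd (f $ n - g $ n) + (g $ n - h $ n)"
    using assms by (intro dvd_add) (auto simp: fps_cong_upto_def)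
  then show "m dvd f $ n - h $ n" by simp
qed

lemma fps_cong_upto_add:
  assumes "fps_cong_upto T m f f'" "fps_cong_upto T m g g'"
  shows "fps_cong_upto T m (f + g) (f' + g')"
  unfolding fps_cong_upto_def
proof (intro allI impI)
  fix n assume "n < T"
  then have "m dvd (f $ n - f' $ n) + (g $ n - g' $ n)"
    using assms by (intro dvd_add) (auto simp: fps_cong_upto_def)
  then show "m dvd (f + g) $ n - (f' + g') $ n" by (simp add: algebra_simps)
qed

lemma fps_cong_upto_mult:
  assumes "fps_cong_upto T m f f'" "fps_cong_upto T m g g'"
  shows "fps_cong_upto T m (f * g) (f' * g')"
  unfolding fps_cong_upto_def
proof (intro allI impI)
  fix n assume n: "n < T"
  have "(f * g) $ n - (f' * g') $ n =
      (\<Sum>i=0..n. (f $ i - f' $ i) * g $ (n - i) + f' $ i * (g $ (n - i) - g' $ (n - i)))"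
    by (simp add: fps_mult_nth sum_subtractf[symmetric] algebra_simps)
  also have "m dvd \<dots>"
    using assms n by (intro dvd_sum dvd_add dvd_mult2 dvd_mult) (auto simp: fps_cong_upto_def)
  finally show "m dvd (f * g) $ n - (f' * g') $ n" .
qed

lemma fps_cong_upto_power: "fps_cong_upto T m f g \<Longrightarrow> fps_cong_upto T m (f ^ k) (g ^ k)"
  by (induction k) (auto intro: fps_cong_upto_mult)

lemma fps_cong_upto_sum:
  "finite A \<Longrightarrow> (\<And>a. a \<in> A \<Longrightarrow> fps_cong_upto T m (f a) (g a)) \<Longrightarrow>
    fps_cong_upto T m (\<Sum>a\<in>A. f a) (\<Sum>a\<in>A. g a)"
  by (induction A rule: finite_induct) (auto intro: fps_cong_upto_add)

lemma fps_cong_upto_mono: "fps_cong_upto T m f g \<Longrightarrow> T' \<le> T \<Longrightarrow> fps_cong_upto T' m f g"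
  by (auto simp: fps_cong_upto_def)

lemma fps_cong_refl [intro]: "fps_cong m f f"
  by (simp add: fps_cong_def)

lemma fps_cong_sym: "fps_cong m f g \<Longrightarrow> fps_cong m g f"
  using fps_cong_upto_sym fps_cong_iff_upto by blast

lemma fps_cong_trans: "fps_cong m f g \<Longrightarrow> fps_cong m g h \<Longrightarrow> fps_cong m f h"
  using fps_cong_upto_trans fps_cong_iff_upto by blast

lemma fps_cong_add: "fps_cong m f f' \<Longrightarrow> fps_cong m g g' \<Longrightarrow> fps_cong m (f + g) (f' + g')"
  using fps_cong_upto_add fps_cong_iff_upto by blast

lemma fps_cong_mult: "fps_cong m f f' \<Longrightarrow> fps_cong m g g' \<Longrightarrow> fps_cong m (f * g) (f' * g')"
  using fps_cong_upto_mult fps_cong_iff_upto by blast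

lemma fps_cong_if_diff_eq: "f - g = fps_const m * h \<Longrightarrow> fps_cong m f g"
  unfolding fps_cong_def by (metis dvd_triv_left fps_mult_left_const_nth fps_sub_nth)

lemma fps_nth_sum_monomials:
  assumes "finite A"
  shows "(\<Sum>j\<in>A. fps_const (c j) * fps_X ^ e j) $ n = (\<Sum>j | j \<in> A \<and> e j = n. c j)"
proof -
  have "(\<Sum>j\<in>A. fps_const (c j) * fps_X ^ e j) $ n = (\<Sum>j\<in>A. if e j = n then c j else 0)"
    by (auto simp: fps_sum_nth intro!: sum.cong)
  also have "\<dots> = (\<Sum>j | j \<in> A \<and> e j = n. c j)"
    using assms by (simp add: sum.inter_filter)
  finally show ?thesis .
qed

lemma fps_mult_nth_nonzero:
  fixes f g :: "'a::semiring_0 fps"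
  assumes "(f * g) $ n \<noteq> 0"
  obtains i where "i \<le> n" "f $ i \<noteq> 0" "g $ (n - i) \<noteq> 0"
proof (rule ccontr)
  assume "\<not> thesis"
  with that have "f $ i * g $ (n - i) = 0" if "i \<in> {0..n}" for i
    using \<open>i \<in> {0..n}\<close> by fastforce
  with assms show False by (simp add: fps_mult_nth)
qed

definition neg1_pow :: "int \<Rightarrow> int" where
  "neg1_pow k = (if even k then 1 else -1)"

lemma neg1_pow_add: "neg1_pow (a + b) = neg1_pow a * neg1_pow b"
  by (auto simp: neg1_pow_def)

lemma neg1_pow_square: "neg1_pow (k ^ 2) = neg1_pow k"
  by (simp add: neg1_pow_def)

lemma neg1_pow_odd_power: "odd e \<Longrightarrow> neg1_pow k ^ e = neg1_pow k"
  by (simp add: neg1_pow_def)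

definition theta_coeff :: "nat \<Rightarrow> int" where
  "theta_coeff n = (\<Sum>j | j\<^sup>2 = int n. neg1_pow j)"

definition theta :: "int fps" where
  "theta = Abs_fps theta_coeff"

definition theta_term :: "int \<Rightarrow> int fps" where
  "theta_term j = fps_const (neg1_pow j) * fps_X ^ nat (j\<^sup>2)"

definition theta_partial :: "nat \<Rightarrow> int fps" where
  "theta_partial N = (\<Sum>j\<in>{-int N..int N}. theta_term j)"

lemma abs_le_square: "\<bar>j::int\<bar> \<le> j\<^sup>2"
proof (cases "j = 0")
  case False
  then have "\<bar>j\<bar> * 1 \<le> \<bar>j\<bar> * \<bar>j\<bar>" by (intro mult_left_mono) auto
  then show ?thesis by (simp add: power2_eq_square abs_mult_self_eq)
qed simp

lemma theta_coeff_nonsquare: "\<nexists>j. j\<^sup>2 = int n \<Longrightarrow> theta_coeff n = 0"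
  by (simp add: theta_coeff_def)

lemma theta_coeff_square:
  assumes "j\<^sup>2 = int n"
  shows "theta_coeff n = (if j = 0 then 1 else 2 * neg1_pow j)"
proof -
  have "{i. i\<^sup>2 = int n} = {j, -j}"
    unfolding assms[symmetric] by (auto simp: power2_eq_iff)
  then show ?thesis
    unfolding theta_coeff_def by (auto simp: neg1_pow_def)
qed

lemma theta_coeff_0: "theta_coeff 0 = 1"
  using theta_coeff_square[of 0 0] by simp

lemma theta_coeff_even:
  assumes "n > 0"
  shows "even (theta_coeff n)"
proof (cases "\<exists>j. j\<^sup>2 = int n")
  case True
  then obtain j where j: "j\<^sup>2 = int n" by blast
  with assms have "j \<noteq> 0" by auto
  with theta_coeff_square[OF j] show ?thesis by simp
qed (simp add: theta_coeff_nonsquare)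

lemma theta_nth_nonzero: "theta $ n \<noteq> 0 \<Longrightarrow> \<exists>j. j\<^sup>2 = int n"
  using theta_coeff_nonsquare by (force simp: theta_def)

lemma theta_partial_nth:
  assumes "n \<le> N"
  shows "theta_partial N $ n = theta_coeff n"
proof -
  have roots: "{j. j \<in> {-int N..int N} \<and> nat (j\<^sup>2) = n} = {j. j\<^sup>2 = int n}"
  proof (intro set_eqI iffI)
    fix j assume "j \<in> {j. j\<^sup>2 = int n}"
    then have "\<bar>j\<bar> \<le> int N" using abs_le_square[of j] assms by simp
    with \<open>j \<in> {j. j\<^sup>2 = int n}\<close> show "j \<in> {j. j \<in> {-int N..int N} \<and> nat (j\<^sup>2) = n}" by auto
  qed auto
  have "theta_partial N $ n = (\<Sum>j | j \<in> {-int N..int N} \<and> nat (j\<^sup>2) = n. neg1_pow j)"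
    unfolding theta_partial_def theta_term_def by (rule fps_nth_sum_monomials) simp
  then show ?thesis unfolding roots theta_coeff_def .
qed

lemma theta_cong_upto_partial: "fps_cong_upto (Suc N) 0 theta (theta_partial N)"
  unfolding fps_cong_upto_0_iff theta_def by (simp add: theta_partial_nth)

lemma square_supported_power2_nth_nonzero:
  assumes "\<And>k. f $ k \<noteq> 0 \<Longrightarrow> \<exists>j. j\<^sup>2 = int k" "(f ^ 2) $ n \<noteq> 0"
  shows "\<exists>a b. a\<^sup>2 + b\<^sup>2 = int n"
proof -
  from assms(2) obtain i where "i \<le> n" "f $ i \<noteq> 0" "f $ (n - i) \<noteq> 0"
    unfolding power2_eq_square by (rule fps_mult_nth_nonzero)
  moreover obtain a b where "a\<^sup>2 = int i" "b\<^sup>2 = int (n - i)"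
    using calculation assms(1) by meson
  ultimately show ?thesis by (intro exI[of _ a] exI[of _ b]) simp
qed

lemma square_supported_power3_nth_nonzero:
  assumes "\<And>k. f $ k \<noteq> 0 \<Longrightarrow> \<exists>j. j\<^sup>2 = int k" "(f ^ 3) $ n \<noteq> 0"
  shows "\<exists>a b c. a\<^sup>2 + b\<^sup>2 + c\<^sup>2 = int n"
proof -
  have "f ^ 3 = f * f ^ 2" by (simp add: eval_nat_numeral)
  with assms(2) obtain i where "i \<le> n" "f $ i \<noteq> 0" "(f ^ 2) $ (n - i) \<noteq> 0"
    by (metis fps_mult_nth_nonzero)
  moreover obtain a b c where "a\<^sup>2 = int i" "b\<^sup>2 + c\<^sup>2 = int (n - i)"
    using calculation assms(1) square_supported_power2_nth_nonzero[OF assms(1)] by meson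
  ultimately show ?thesis by (intro exI[of _ a] exI[of _ b] exI[of _ c]) simp
qed

section \<open>Frobenius congruence modulo 5\<close>

lemma fps_cong_power5_add: "fps_cong 5 ((f + g) ^ 5) (f ^ 5 + g ^ 5 :: 'a::comm_ring_1 fps)"
proof (rule fps_cong_if_diff_eq)
  show "(f + g) ^ 5 - (f ^ 5 + g ^ 5) = fps_const 5 * (f * g * (f^3 + 2*f^2*g + 2*f*g^2 + g^3))"
    by (simp add: fps_numeral_fps_const[symmetric] algebra_simps power2_eq_square power3_eq_cube
        numeral_eq_Suc)
qed

lemma fps_cong_power5_sum:
  "finite A \<Longrightarrow> fps_cong 5 ((\<Sum>a\<in>A. f a) ^ 5) (\<Sum>a\<in>A. f a ^ 5 :: 'a::comm_ring_1 fps)"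
proof (induction A rule: finite_induct)
  case (insert a A)
  have "fps_cong 5 (f a ^ 5 + (\<Sum>a\<in>A. f a) ^ 5) (f a ^ 5 + (\<Sum>a\<in>A. f a ^ 5))"
    using insert.IH by (intro fps_cong_add fps_cong_refl)
  with insert show ?case by (auto intro: fps_cong_trans[OF fps_cong_power5_add])
qed auto

definition fps_dilate :: "nat \<Rightarrow> 'a::zero fps \<Rightarrow> 'a fps" where
  "fps_dilate k f = Abs_fps (\<lambda>n. if k dvd n then f $ (n div k) else 0)"

definition fps_decimate :: "nat \<Rightarrow> 'a fps \<Rightarrow> 'a fps" where
  "fps_decimate k f = Abs_fps (\<lambda>n. f $ (k * n))"

lemma fps_decimate_dilate_mult:
  fixes f g :: "'a::semiring_0 fps"
  assumes "k > 0"
  shows "fps_decimate k (fps_dilate k f * g) = f * fps_decimate k g"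
proof (rule fps_ext)
  fix n
  have "(fps_dilate k f * g) $ (k * n) =
      (\<Sum>i=0..k * n. if k dvd i then f $ (i div k) * g $ (k * n - i) else 0)"
    by (auto simp: fps_mult_nth fps_dilate_def intro!: sum.cong)
  also have "\<dots> = (\<Sum>i | i \<in> {0..k * n} \<and> k dvd i. f $ (i div k) * g $ (k * n - i))"
    by (rule sum.inter_filter[symmetric]) simp
  also have "{i. i \<in> {0..k * n} \<and> k dvd i} = (\<lambda>j. k * j) ` {0..n}"
    using assms by (auto elim!: dvdE)
  also have "(\<Sum>i\<in>(\<lambda>j. k * j) ` {0..n}. f $ (i div k) * g $ (k * n - i)) =
      (\<Sum>j=0..n. f $ j * g $ (k * (n - j)))"
    using assms by (subst sum.reindex) (auto simp: inj_on_def right_diff_distrib')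
  finally show "fps_decimate k (fps_dilate k f * g) $ n = (f * fps_decimate k g) $ n"
    by (simp add: fps_mult_nth fps_decimate_def)
qed

lemma fps_cong_decimate: "fps_cong m f g \<Longrightarrow> fps_cong m (fps_decimate k f) (fps_decimate k g)"
  by (simp add: fps_cong_def fps_decimate_def)

lemma sum_theta_term_power5_nth:
  "(\<Sum>j\<in>{-int n..int n}. theta_term j ^ 5) $ n = fps_dilate 5 theta $ n"
proof -
  have "(\<Sum>j\<in>{-int n..int n}. theta_term j ^ 5) =
      (\<Sum>j\<in>{-int n..int n}. fps_const (neg1_pow j) * fps_X ^ (5 * nat (j\<^sup>2)))"
    by (simp add: theta_term_def power_mult_distrib neg1_pow_odd_power power_mult[symmetric]
        mult.commute)
  also have "\<dots> $ n = (\<Sum>j | j \<in> {-int n..int n} \<and> 5 * nat (j\<^sup>2) = n. neg1_pow j)"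
    by (rule fps_nth_sum_monomials) simp
  also have "\<dots> = fps_dilate 5 theta $ n"
  proof (cases "5 dvd n")
    case True
    then obtain k where k: "n = 5 * k" by auto
    then have "(\<Sum>j | j \<in> {-int n..int n} \<and> 5 * nat (j\<^sup>2) = n. neg1_pow j) = theta_partial n $ k"
      unfolding theta_partial_def theta_term_def by (subst fps_nth_sum_monomials) simp_all
    with k show ?thesis by (simp add: theta_partial_nth fps_dilate_def theta_def)
  next
    case False
    then have "{j. j \<in> {-int n..int n} \<and> 5 * nat (j\<^sup>2) = n} = {}" by auto
    with False show ?thesis by (simp only: sum.empty) (simp add: fps_dilate_def)
  qed
  finally show ?thesis .
qed

lemma theta_power5_cong: "fps_cong 5 (theta ^ 5) (fps_dilate 5 theta)"
  unfolding fps_cong_def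
proof
  fix n
  have "fps_cong_upto (Suc n) 0 (theta ^ 5) (theta_partial n ^ 5)"
    by (intro fps_cong_upto_power theta_cong_upto_partial)
  then have "theta ^ 5 $ n = theta_partial n ^ 5 $ n"
    by (simp add: fps_cong_upto_0_iff)
  moreover have "fps_cong 5 (theta_partial n ^ 5) (\<Sum>j\<in>{-int n..int n}. theta_term j ^ 5)"
    unfolding theta_partial_def by (rule fps_cong_power5_sum) simp
  ultimately show "5 dvd theta ^ 5 $ n - fps_dilate 5 theta $ n"
    using sum_theta_term_power5_nth[of n] unfolding fps_cong_def by metis
qed

section \<open>Gauss' identity for the overpartition generating function\<close>

definition geometric_fps :: "nat \<Rightarrow> int fps" where
  "geometric_fps k = Abs_fps (\<lambda>n. if k dvd n then 1 else 0)"

lemma geometric_fps_mult: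
  assumes "k > 0"
  shows "geometric_fps k * (1 - fps_X ^ k) = 1"
proof (rule fps_ext)
  fix n
  have "k dvd n \<longleftrightarrow> (if n < k then n = 0 else k dvd (n - k))"
    using assms by (auto dest: dvd_imp_le simp: dvd_minus_self)
  then show "(geometric_fps k * (1 - fps_X ^ k)) $ n = 1 $ n"
    using assms by (simp add: geometric_fps_def right_diff_distrib fps_X_power_mult_right_nth split: if_splits)
qed

text \<open>\<open>inv_qpochhammer m\<close> is \<open>1/(q;q)\<^sub>m\<close>, extended by \<open>0\<close> to negative \<open>m\<close> so that the boundary
  terms of the finite Gauss sum below vanish.\<close>

definition inv_qpochhammer :: "int \<Rightarrow> int fps" where
  "inv_qpochhammer m = (if m < 0 then 0 else \<Prod>k\<in>{1..nat m}. geometric_fps k)"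

lemma inv_qpochhammer_of_nat: "inv_qpochhammer (int m) = (\<Prod>k\<in>{1..m}. geometric_fps k)"
  by (simp add: inv_qpochhammer_def)

lemma inv_qpochhammer_pred:
  assumes "m \<ge> 0"
  shows "inv_qpochhammer (m - 1) = (1 - fps_X ^ nat m) * inv_qpochhammer m"
proof (cases "m = 0")
  case False
  with assms have "{1..nat m} = insert (nat m) {1..nat (m - 1)}" "nat m \<notin> {1..nat (m - 1)}"
    by (auto simp: nat_diff_distrib)
  with False assms have "inv_qpochhammer m = geometric_fps (nat m) * inv_qpochhammer (m - 1)"
    by (simp add: inv_qpochhammer_def)
  with False assms show ?thesis
    by (simp add: geometric_fps_mult mult.assoc[symmetric] mult.commute[of "1 - _"])
qed (simp add: inv_qpochhammer_def)

definition gauss_term :: "int \<Rightarrow> int \<Rightarrow> int fps" where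
  "gauss_term N j = theta_term j * inv_qpochhammer (N - j) * inv_qpochhammer (N + j)"

definition gauss_telescoper :: "int \<Rightarrow> int \<Rightarrow> int fps" where
  "gauss_telescoper N j =
     fps_const (neg1_pow j) * fps_X ^ nat (j\<^sup>2 + N + j) * inv_qpochhammer (N - 1 - j) * inv_qpochhammer (N + j)"

lemma gauss_term_pred:
  assumes "-N \<le> j" "j \<le> N"
  shows "gauss_term (N - 1) j = gauss_term N j * (1 - fps_X ^ nat (N - j)) * (1 - fps_X ^ nat (N + j))"
proof -
  have "inv_qpochhammer (N - 1 - j) = (1 - fps_X ^ nat (N - j)) * inv_qpochhammer (N - j)"
    and "inv_qpochhammer (N - 1 + j) = (1 - fps_X ^ nat (N + j)) * inv_qpochhammer (N + j)"
    using inv_qpochhammer_pred[of "N - j"] inv_qpochhammer_pred[of "N + j"] assms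
    by (simp_all add: algebra_simps)
  then show ?thesis
    unfolding gauss_term_def by (simp only:) (simp add: algebra_simps)
qed

lemma gauss_telescoper_eq:
  assumes "-N \<le> j" "j \<le> N"
  shows "gauss_telescoper N j = gauss_term N j * fps_X ^ nat (N + j) * (1 - fps_X ^ nat (N - j))"
proof -
  have "nat (j\<^sup>2 + N + j) = nat (j\<^sup>2) + nat (N + j)"
    using assms by (simp add: nat_add_distrib[symmetric] add.assoc)
  moreover have "inv_qpochhammer (N - 1 - j) = (1 - fps_X ^ nat (N - j)) * inv_qpochhammer (N - j)"
    using inv_qpochhammer_pred[of "N - j"] assms by (simp add: algebra_simps)
  ultimately show ?thesis
    unfolding gauss_telescoper_def gauss_term_def theta_term_def
    by (simp only: power_add) (simp add: algebra_simps)
qed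

lemma gauss_telescoper_pred_eq:
  assumes "-N \<le> j" "j \<le> N"
  shows "gauss_telescoper N (j - 1) = - (gauss_term N j * fps_X ^ nat (N - j) * (1 - fps_X ^ nat (N + j)))"
proof -
  have "nat ((j - 1)\<^sup>2 + N + (j - 1)) = nat (j\<^sup>2) + nat (N - j)"
    using assms by (simp add: power2_eq_square algebra_simps nat_add_distrib[symmetric])
  then have X: "fps_X ^ nat ((j - 1)\<^sup>2 + N + (j - 1)) = fps_X ^ nat (j\<^sup>2) * fps_X ^ nat (N - j)"
    by (simp add: power_add)
  have q: "inv_qpochhammer (N + (j - 1)) = (1 - fps_X ^ nat (N + j)) * inv_qpochhammer (N + j)"
    using inv_qpochhammer_pred[of "N + j"] assms by (simp add: algebra_simps)
  have sign: "fps_const (neg1_pow (j - 1)) = - fps_const (neg1_pow j)"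
    by (simp add: neg1_pow_def)
  show ?thesis
    unfolding gauss_telescoper_def gauss_term_def theta_term_def X q sign
    by (simp add: algebra_simps del: fps_const_neg)
qed

lemma gauss_term_recurrence:
  assumes "-N \<le> j" "j \<le> N"
  shows "gauss_term N j * (1 - fps_X ^ nat (2 * N)) =
           gauss_term (N - 1) j + gauss_telescoper N j - gauss_telescoper N (j - 1)"
proof -
  have "nat (2 * N) = nat (N - j) + nat (N + j)"
    using assms by linarith
  then show ?thesis
    using assms by (simp add: gauss_term_pred gauss_telescoper_eq gauss_telescoper_pred_eq
        power_add algebra_simps)
qed

lemma sum_telescope_int:
  fixes f :: "int \<Rightarrow> 'a::ab_group_add"
  assumes "a - 1 \<le> b"
  shows "(\<Sum>j\<in>{a..b}. f j - f (j - 1)) = f b - f (a - 1)"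
  using assms
proof (induction b rule: int_ge_induct)
  case (step i)
  have "{a..i + 1} = insert (i + 1) {a..i}" using step by auto
  with step show ?case by simp
qed simp

definition gauss_sum :: "nat \<Rightarrow> int fps" where
  "gauss_sum N = (\<Sum>j\<in>{-int N..int N}. gauss_term (int N) j)"

lemma gauss_sum_Suc: "gauss_sum (Suc N) * (1 - fps_X ^ (2 * Suc N)) = gauss_sum N"
proof -
  define M where "M = int (Suc N)"
  have M: "M \<ge> 1" "nat (2 * M) = 2 * Suc N" by (simp_all add: M_def)
  have boundary: "gauss_telescoper M M = 0" "gauss_telescoper M (-M - 1) = 0"
    by (simp_all add: gauss_telescoper_def inv_qpochhammer_def)
  have outer: "gauss_term (M - 1) M = 0" "gauss_term (M - 1) (-M) = 0"
    by (simp_all add: gauss_term_def inv_qpochhammer_def)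
  have "gauss_sum (Suc N) * (1 - fps_X ^ (2 * Suc N)) =
      (\<Sum>j\<in>{-M..M}. gauss_term (M - 1) j + (gauss_telescoper M j - gauss_telescoper M (j - 1)))"
    unfolding gauss_sum_def M_def[symmetric] M(2)[symmetric] sum_distrib_right
    by (intro sum.cong refl) (simp add: gauss_term_recurrence)
  also have "\<dots> = (\<Sum>j\<in>{-M..M}. gauss_term (M - 1) j)"
    using M boundary by (simp add: sum.distrib sum_telescope_int)
  also have "\<dots> = (\<Sum>j\<in>{-(M - 1)..M - 1}. gauss_term (M - 1) j)"
  proof (rule sum.mono_neutral_right)
    show "\<forall>i\<in>{-M..M} - {-(M - 1)..M - 1}. gauss_term (M - 1) i = 0"
    proof
      fix i assume "i \<in> {-M..M} - {-(M - 1)..M - 1}"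
      then have "i = M \<or> i = -M" by auto
      with outer show "gauss_term (M - 1) i = 0" by auto
    qed
  qed auto
  finally show ?thesis by (simp add: gauss_sum_def M_def)
qed

lemma gauss_sum_mult: "gauss_sum N * (\<Prod>k\<in>{1..N}. 1 - fps_X ^ (2 * k)) = 1"
proof (induction N)
  case 0
  show ?case
    by (simp add: gauss_sum_def gauss_term_def theta_term_def inv_qpochhammer_def neg1_pow_def)
next
  case (Suc N)
  have "gauss_sum (Suc N) * (\<Prod>k\<in>{1..Suc N}. 1 - fps_X ^ (2 * k)) =
      gauss_sum (Suc N) * (1 - fps_X ^ (2 * Suc N)) * (\<Prod>k\<in>{1..N}. 1 - fps_X ^ (2 * k))"
    by (simp add: mult.assoc)
  also have "\<dots> = gauss_sum N * (\<Prod>k\<in>{1..N}. 1 - fps_X ^ (2 * k))"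
    by (simp only: gauss_sum_Suc)
  finally show ?case using Suc.IH by (rule trans)
qed

definition qpochhammer :: "nat \<Rightarrow> int fps" where
  "qpochhammer N = (\<Prod>k\<in>{1..N}. 1 - fps_X ^ k)"

definition qpochhammer_neg :: "nat \<Rightarrow> int fps" where
  "qpochhammer_neg N = (\<Prod>k\<in>{1..N}. 1 + fps_X ^ k)"

lemma prod_one_minus_X_power_double:
  "(\<Prod>k\<in>{1..N}. 1 - fps_X ^ (2 * k)) = qpochhammer N * qpochhammer_neg N"
proof -
  have "1 - fps_X ^ (2 * k) = (1 - fps_X ^ k) * (1 + (fps_X ^ k :: int fps))" for k
    by (simp add: power_mult power2_eq_square algebra_simps)
  then show ?thesis
    by (simp add: qpochhammer_def qpochhammer_neg_def prod.distrib)
qed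

lemma inv_qpochhammer_mult_qpochhammer: "inv_qpochhammer (int N) * qpochhammer N = 1"
  by (simp add: inv_qpochhammer_of_nat qpochhammer_def prod.distrib[symmetric] geometric_fps_mult)

lemma fps_cong_upto_prod_stable:
  assumes "\<And>k. T < k \<Longrightarrow> fps_cong_upto T 0 (F k) 1" "T \<le> N"
  shows "fps_cong_upto T 0 (\<Prod>k\<in>{1..N}. F k) (\<Prod>k\<in>{1..T}. F k)"
  using assms(2)
proof (induction N rule: dec_induct)
  case (step N)
  have "fps_cong_upto T 0 (F (Suc N) * (\<Prod>k\<in>{1..N}. F k)) (1 * (\<Prod>k\<in>{1..T}. F k))"
    using step assms(1)[of "Suc N"] by (intro fps_cong_upto_mult) auto
  then show ?case by (simp add: mult.commute)
qed auto

lemma inv_qpochhammer_cong_upto: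
  assumes "T \<le> M"
  shows "fps_cong_upto T 0 (inv_qpochhammer (int M)) (inv_qpochhammer (int T))"
proof -
  have "fps_cong_upto T 0 (geometric_fps k) 1" if "T < k" for k
    using that by (auto simp: fps_cong_upto_0_iff geometric_fps_def dest: dvd_imp_le)
  with assms show ?thesis
    unfolding inv_qpochhammer_of_nat by (intro fps_cong_upto_prod_stable)
qed

lemma gauss_term_cong_upto:
  assumes "2 * T \<le> N" "j \<in> {-int N..int N}"
  shows "fps_cong_upto T 0 (gauss_term (int N) j)
           (theta_term j * (inv_qpochhammer (int T) * inv_qpochhammer (int T)))"
proof (cases "int T \<le> j\<^sup>2")
  case True
  then have "T \<le> nat (j\<^sup>2)" by linarith
  then show ?thesis
    by (simp add: gauss_term_def theta_term_def fps_cong_upto_0_iff mult.assoc fps_X_power_mult_nth)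
next
  case False
  then have "\<bar>j\<bar> < int T" using abs_le_square[of j] by linarith
  define u where "u = nat (int N - j)"
  define v where "v = nat (int N + j)"
  have uv: "int u = int N - j" "int v = int N + j" "T \<le> u" "T \<le> v"
    using assms \<open>\<bar>j\<bar> < int T\<close> by (auto simp: u_def v_def)
  have "fps_cong_upto T 0 (inv_qpochhammer (int N - j)) (inv_qpochhammer (int T))"
    using inv_qpochhammer_cong_upto[of T u] uv by simp
  moreover have "fps_cong_upto T 0 (inv_qpochhammer (int N + j)) (inv_qpochhammer (int T))"
    using inv_qpochhammer_cong_upto[of T v] uv by simp
  ultimately show ?thesis
    unfolding gauss_term_def mult.assoc by (intro fps_cong_upto_mult fps_cong_upto_refl)
qed

text \<open>Below degree \<open>T\<close>, the finite Gauss identity for \<open>N = 2T\<close> only sees the terms with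
  \<open>j\<^sup>2 < T\<close>, and for these both \<open>1/(q;q)\<^sub>N\<^sub>\<plusminus>\<^sub>j\<close> agree with \<open>1/(q;q)\<^sub>T\<close>.\<close>

lemma theta_mult_truncated_cong_upto:
  assumes "0 < T"
  shows "fps_cong_upto T 0 (theta * (inv_qpochhammer (int T) * qpochhammer_neg T)) 1"
proof -
  define N where "N = 2 * T"
  define W where "W = inv_qpochhammer (int T) * inv_qpochhammer (int T)"
  have "fps_cong_upto T 0 (gauss_sum N) (\<Sum>j\<in>{-int N..int N}. theta_term j * W)"
    unfolding gauss_sum_def W_def by (intro fps_cong_upto_sum gauss_term_cong_upto) (auto simp: N_def)
  then have sum: "fps_cong_upto T 0 (gauss_sum N) (theta_partial N * W)"
    by (simp add: theta_partial_def sum_distrib_right)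
  have "fps_cong_upto T 0 (\<Prod>k\<in>{1..N}. 1 - fps_X ^ (2 * k)) (qpochhammer T * qpochhammer_neg T)"
    unfolding prod_one_minus_X_power_double qpochhammer_def qpochhammer_neg_def
    by (intro fps_cong_upto_mult fps_cong_upto_prod_stable) (auto simp: N_def fps_cong_upto_0_iff)
  with sum have "fps_cong_upto T 0 1 (theta_partial N * W * (qpochhammer T * qpochhammer_neg T))"
    using gauss_sum_mult[of N] fps_cong_upto_mult by fastforce
  also have "theta_partial N * W * (qpochhammer T * qpochhammer_neg T) =
      theta_partial N * (inv_qpochhammer (int T) * qpochhammer_neg T) *
        (inv_qpochhammer (int T) * qpochhammer T)"
    by (simp add: W_def algebra_simps)
  finally have "fps_cong_upto T 0 1 (theta_partial N * (inv_qpochhammer (int T) * qpochhammer_neg T))"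
    by (simp add: inv_qpochhammer_mult_qpochhammer)
  moreover have "fps_cong_upto T 0 (theta_partial N) theta"
    by (rule fps_cong_upto_sym, rule fps_cong_upto_mono[OF theta_cong_upto_partial]) (simp add: N_def)
  ultimately show ?thesis
    by (meson fps_cong_upto_mult fps_cong_upto_refl fps_cong_upto_sym fps_cong_upto_trans)
qed

section \<open>Overpartitions with parts in a given set\<close>

lemma count_mult_le_sum_mset: "count A k * k \<le> sum_mset (A :: nat multiset)"
proof -
  have "replicate_mset (count A k) k \<subseteq># A"
    by (simp flip: count_le_replicate_mset_subset_eq)
  then have "A = replicate_mset (count A k) k + (A - replicate_mset (count A k) k)"
    by (simp add: subset_mset.add_diff_inverse)
  then have "sum_mset A = count A k * k + sum_mset (A - replicate_mset (count A k) k)"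
    by (metis sum_mset.union sum_mset_replicate_mset of_nat_id)
  then show ?thesis by simp
qed

lemma member_le_sum_mset:
  assumes "x \<in># A"
  shows "x \<le> sum_mset (A :: nat multiset)"
proof -
  from assms have "x \<le> count A x * x" by simp
  with count_mult_le_sum_mset[of A x] show ?thesis by linarith
qed

lemma size_le_sum_mset: "(\<forall>x\<in>#A. 0 < x) \<Longrightarrow> size A \<le> sum_mset (A :: nat multiset)"
  by (induction A) auto

lemma finite_overpartitions: "finite (overpartitions n)"
proof (rule finite_subset)
  show "overpartitions n \<subseteq> (\<Union>s\<in>{0..n}. multisets_of_size {1..n} s) \<times> Pow {1..n}"
  proof
    fix x assume "x \<in> overpartitions n"
    then obtain A S where x: "x = (A, S)" "\<forall>x\<in>#A. 0 < x" "sum_mset A = n" "S \<subseteq> set_mset A"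
      by (auto simp: overpartitions_def)
    have "set_mset A \<subseteq> {1..n}" using x member_le_sum_mset by fastforce
    moreover have "size A \<le> n" using size_le_sum_mset[OF x(2)] x(3) by simp
    ultimately show "x \<in> (\<Union>s\<in>{0..n}. multisets_of_size {1..n} s) \<times> Pow {1..n}"
      using x by (auto simp: multisets_of_size_def)
  qed
qed auto

definition overpartitions_with_parts :: "nat set \<Rightarrow> nat \<Rightarrow> (nat multiset \<times> nat set) set" where
  "overpartitions_with_parts K n = {x \<in> overpartitions n. set_mset (fst x) \<subseteq> K}"

lemma finite_overpartitions_with_parts: "finite (overpartitions_with_parts K n)"
  unfolding overpartitions_with_parts_def by (rule finite_subset[OF _ finite_overpartitions]) auto

lemma overpartitions_with_parts_empty:
  "overpartitions_with_parts {} n = (if n = 0 then {({#}, {})} else {})"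
  by (auto simp: overpartitions_with_parts_def overpartitions_def)

lemma overpartitions_with_parts_atLeastAtMost:
  "n \<le> T \<Longrightarrow> overpartitions_with_parts {1..T} n = overpartitions n"
  unfolding overpartitions_with_parts_def overpartitions_def
  by (force dest: member_le_sum_mset)

lemma overpartitions_with_parts_count_0:
  "k \<notin> K \<Longrightarrow> {x \<in> overpartitions_with_parts (insert k K) n. count (fst x) k = 0} =
     overpartitions_with_parts K n"
  by (auto simp: overpartitions_with_parts_def count_eq_zero_iff)

lemma overpartitions_with_parts_count_le:
  "x \<in> overpartitions_with_parts K n \<Longrightarrow> count (fst x) k * k \<le> n"
  using count_mult_le_sum_mset[of "fst x" k]
  by (auto simp: overpartitions_with_parts_def overpartitions_def)

lemma overpartition_remove_parts:
  assumes "(A, S) \<in> overpartitions_with_parts (insert k K) n" "count A k = j"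
  shows "(A - replicate_mset j k, S - {k}) \<in> overpartitions_with_parts K (n - j * k)"
proof -
  define R where "R = replicate_mset j k"
  have pos: "\<forall>x\<in>#A. 0 < x" and sum: "sum_mset A = n" and S: "S \<subseteq> set_mset A"
    and parts: "set_mset A \<subseteq> insert k K"
    using assms(1) by (auto simp: overpartitions_with_parts_def overpartitions_def)
  have "R \<subseteq># A" using assms(2) by (simp add: R_def flip: count_le_replicate_mset_subset_eq)
  then have "sum_mset A = sum_mset (A - R) + j * k"
    by (metis R_def subset_mset.diff_add sum_mset.union sum_mset_replicate_mset of_nat_id mult.commute)
  with sum have "sum_mset (A - R) = n - j * k" by simp
  moreover have "\<forall>x\<in>#A - R. 0 < x" using pos by (auto dest: in_diffD)
  moreover have "set_mset (A - R) \<subseteq> K"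
  proof
    fix x assume x: "x \<in># A - R"
    have "count (A - R) k = 0" using assms(2) by (simp add: R_def)
    with x have "x \<noteq> k" by (metis not_in_iff)
    with x parts show "x \<in> K" by (auto dest: in_diffD)
  qed
  moreover have "S - {k} \<subseteq> set_mset (A - R)"
  proof
    fix x assume "x \<in> S - {k}"
    then have "x \<in># A" "x \<noteq> k" using S by auto
    then show "x \<in># A - R" by (simp add: R_def count_eq_zero_iff[symmetric] in_diff_count)
  qed
  ultimately show ?thesis
    by (simp add: R_def overpartitions_with_parts_def overpartitions_def)
qed

lemma overpartition_add_parts:
  assumes "(A, S) \<in> overpartitions_with_parts K (n - j * k)"
    and "k > 0" "k \<notin> K" "j \<ge> 1" "j * k \<le> n" "S' \<in> {S, insert k S}"
  shows "(A + replicate_mset j k, S') \<in> overpartitions_with_parts (insert k K) n"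
    and "count (A + replicate_mset j k) k = j"
proof -
  have pos: "\<forall>x\<in>#A. 0 < x" and sum: "sum_mset A = n - j * k" and S: "S \<subseteq> set_mset A"
    and parts: "set_mset A \<subseteq> K"
    using assms(1) by (auto simp: overpartitions_with_parts_def overpartitions_def)
  have "k \<in># A + replicate_mset j k" using assms(4) by simp
  with assms(2,5,6) pos sum S parts
  show "(A + replicate_mset j k, S') \<in> overpartitions_with_parts (insert k K) n"
    by (auto simp: overpartitions_with_parts_def overpartitions_def)
  show "count (A + replicate_mset j k) k = j"
    using parts assms(3) by (auto simp: count_eq_zero_iff)
qed

lemma card_overpartitions_with_parts_count:
  assumes "k > 0" "k \<notin> K" "j \<ge> 1" "j * k \<le> n"
  shows "card {x \<in> overpartitions_with_parts (insert k K) n. count (fst x) k = j} =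
           2 * card (overpartitions_with_parts K (n - j * k))"
proof -
  define E where "E = {x \<in> overpartitions_with_parts (insert k K) n. count (fst x) k = j}"
  define remove where "remove = (\<lambda>(A :: nat multiset, S :: nat set). ((A - replicate_mset j k, S - {k}), k \<in> S))"
  define add where
    "add = (\<lambda>((A :: nat multiset, S :: nat set), b). (A + replicate_mset j k, if b then insert k S else S))"
  have "bij_betw remove E (overpartitions_with_parts K (n - j * k) \<times> UNIV)"
  proof (rule bij_betw_byWitness[where f' = add])
    show "\<forall>x\<in>E. add (remove x) = x"
    proof
      fix x assume "x \<in> E"
      then obtain A S where x: "x = (A, S)" "count A k = j" by (cases x) (auto simp: E_def)
      then have "A - replicate_mset j k + replicate_mset j k = A"
        by (simp add: subset_mset.diff_add flip: count_le_replicate_mset_subset_eq)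
      with x show "add (remove x) = x" by (auto simp: add_def remove_def)
    qed
    show "\<forall>y\<in>overpartitions_with_parts K (n - j * k) \<times> UNIV. remove (add y) = y"
      using assms(2) by (auto simp: add_def remove_def overpartitions_with_parts_def overpartitions_def)
    show "remove ` E \<subseteq> overpartitions_with_parts K (n - j * k) \<times> UNIV"
      using overpartition_remove_parts by (auto simp: E_def remove_def)
    show "add ` (overpartitions_with_parts K (n - j * k) \<times> UNIV) \<subseteq> E"
    proof
      fix y assume "y \<in> add ` (overpartitions_with_parts K (n - j * k) \<times> UNIV)"
      then obtain A S b where "(A, S) \<in> overpartitions_with_parts K (n - j * k)" "y = add ((A, S), b)"
        by auto
      with overpartition_add_parts[OF _ assms, of A S "if b then insert k S else S"]
      show "y \<in> E" by (simp add: E_def add_def)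
    qed
  qed
  then have "card E = card (overpartitions_with_parts K (n - j * k) \<times> (UNIV :: bool set))"
    by (rule bij_betw_same_card)
  then show ?thesis by (simp add: E_def card_cartesian_product)
qed

lemma card_overpartitions_with_parts_insert:
  assumes "k > 0" "k \<notin> K"
  shows "card (overpartitions_with_parts (insert k K) n) =
           (\<Sum>j=0..n div k. (if j = 0 then 1 else 2) * card (overpartitions_with_parts K (n - j * k)))"
proof -
  let ?P = "overpartitions_with_parts (insert k K) n"
  have "(\<lambda>x. count (fst x) k) ` ?P \<subseteq> {0..n div k}"
    using assms(1) overpartitions_with_parts_count_le by (auto simp: less_eq_div_iff_mult_less_eq)
  then have "card ?P = (\<Sum>j=0..n div k. card {x \<in> ?P. count (fst x) k = j})"
    using sum_fun_comp[of ?P "{0..n div k}" "\<lambda>x. count (fst x) k" "\<lambda>_. 1 :: nat"]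
    by (simp add: finite_overpartitions_with_parts)
  also have "\<dots> = (\<Sum>j=0..n div k. (if j = 0 then 1 else 2) * card (overpartitions_with_parts K (n - j * k)))"
  proof (intro sum.cong refl)
    fix j assume "j \<in> {0..n div k}"
    then have "j * k \<le> n" using assms(1) by (simp add: less_eq_div_iff_mult_less_eq)
    then show "card {x \<in> ?P. count (fst x) k = j} =
        (if j = 0 then 1 else 2) * card (overpartitions_with_parts K (n - j * k))"
      using assms overpartitions_with_parts_count_0 card_overpartitions_with_parts_count by auto
  qed
  finally show ?thesis .
qed

definition overpartition_factor :: "nat \<Rightarrow> int fps" where
  "overpartition_factor k = (1 + fps_X ^ k) * geometric_fps k"

lemma overpartition_factor_nth:
  assumes "k > 0"
  shows "overpartition_factor k $ i = (if i = 0 then 1 else if k dvd i then 2 else 0)"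
proof -
  have "k dvd i \<longleftrightarrow> (if i < k then i = 0 else k dvd (i - k))"
    using assms by (auto dest: dvd_imp_le simp: dvd_minus_self)
  then show ?thesis
    using assms by (auto simp: overpartition_factor_def geometric_fps_def distrib_right fps_X_power_mult_nth)
qed

lemma overpartition_factor_mult_nth:
  assumes "k > 0"
  shows "(overpartition_factor k * f) $ n = (\<Sum>j=0..n div k. (if j = 0 then 1 else 2) * f $ (n - j * k))"
proof -
  have "(overpartition_factor k * f) $ n = (\<Sum>i=0..n. overpartition_factor k $ i * f $ (n - i))"
    by (simp add: fps_mult_nth)
  also have "\<dots> = (\<Sum>i\<in>(\<lambda>j. j * k) ` {0..n div k}. overpartition_factor k $ i * f $ (n - i))"
  proof (rule sum.mono_neutral_right)
    show "(\<lambda>j. j * k) ` {0..n div k} \<subseteq> {0..n}"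
      using assms by (auto simp: less_eq_div_iff_mult_less_eq)
    show "\<forall>i\<in>{0..n} - (\<lambda>j. j * k) ` {0..n div k}. overpartition_factor k $ i * f $ (n - i) = 0"
    proof
      fix i assume i: "i \<in> {0..n} - (\<lambda>j. j * k) ` {0..n div k}"
      have "\<not> k dvd i"
      proof
        assume "k dvd i"
        then obtain j where "i = j * k" by (metis dvd_def mult.commute)
        with i assms show False by (auto simp: less_eq_div_iff_mult_less_eq)
      qed
      with i assms show "overpartition_factor k $ i * f $ (n - i) = 0"
        by (auto simp: overpartition_factor_nth)
    qed
  qed simp
  also have "\<dots> = (\<Sum>j=0..n div k. overpartition_factor k $ (j * k) * f $ (n - j * k))"
    using assms by (subst sum.reindex) (auto simp: inj_on_def)
  also have "\<dots> = (\<Sum>j=0..n div k. (if j = 0 then 1 else 2) * f $ (n - j * k))"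
    using assms by (intro sum.cong refl) (simp add: overpartition_factor_nth)
  finally show ?thesis .
qed

lemma prod_overpartition_factor_nth:
  assumes "finite K" "0 \<notin> K"
  shows "(\<Prod>k\<in>K. overpartition_factor k) $ n = int (card (overpartitions_with_parts K n))"
  using assms
proof (induction K arbitrary: n rule: finite_induct)
  case empty
  then show ?case by (simp add: overpartitions_with_parts_empty)
next
  case (insert k K)
  then have "k > 0" by auto
  with insert show ?case
    by (simp add: overpartition_factor_mult_nth card_overpartitions_with_parts_insert of_nat_sum
        if_distrib[of int] cong: if_cong)
qed

lemma truncated_overpartition_fps_nth:
  assumes "n \<le> T"
  shows "(inv_qpochhammer (int T) * qpochhammer_neg T) $ n = int (overpartition_count n)"
proof -
  have "inv_qpochhammer (int T) * qpochhammer_neg T = (\<Prod>k\<in>{1..T}. overpartition_factor k)"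
    by (simp add: inv_qpochhammer_of_nat qpochhammer_neg_def overpartition_factor_def
        prod.distrib mult.commute)
  with prod_overpartition_factor_nth[of "{1..T}" n] overpartitions_with_parts_atLeastAtMost[OF assms]
  show ?thesis by (simp add: overpartition_count_def)
qed

definition overpartition_fps :: "int fps" where
  "overpartition_fps = Abs_fps (\<lambda>n. int (overpartition_count n))"

theorem theta_mult_overpartition_fps: "theta * overpartition_fps = 1"
proof (rule fps_ext)
  fix n
  define T where "T = Suc n"
  define P where "P = inv_qpochhammer (int T) * qpochhammer_neg T"
  have "fps_cong_upto T 0 overpartition_fps P"
    unfolding fps_cong_upto_0_iff overpartition_fps_def P_def
    by (simp add: truncated_overpartition_fps_nth)
  then have "fps_cong_upto T 0 (theta * overpartition_fps) (theta * P)"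
    by (intro fps_cong_upto_mult fps_cong_upto_refl)
  with theta_mult_truncated_cong_upto[of T] have "fps_cong_upto T 0 (theta * overpartition_fps) 1"
    unfolding P_def T_def using fps_cong_upto_trans by blast
  then show "(theta * overpartition_fps) $ n = 1 $ n"
    by (simp add: fps_cong_upto_0_iff T_def)
qed

corollary overpartition_fps_mult_theta: "overpartition_fps * theta = 1"
  using theta_mult_overpartition_fps by (simp add: mult.commute)

section \<open>Integral quaternions and sums of four squares modulo 5\<close>

type_synonym int_quat = "int \<times> int \<times> int \<times> int"

fun quat_mult :: "int_quat \<Rightarrow> int_quat \<Rightarrow> int_quat" where
  "quat_mult (a1, b1, c1, d1) (a2, b2, c2, d2) =
     (a1*a2 - b1*b2 - c1*c2 - d1*d2, a1*b2 + b1*a2 + c1*d2 - d1*c2,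
      a1*c2 - b1*d2 + c1*a2 + d1*b2, a1*d2 + b1*c2 - c1*b2 + d1*a2)"

fun quat_add :: "int_quat \<Rightarrow> int_quat \<Rightarrow> int_quat" where
  "quat_add (a1, b1, c1, d1) (a2, b2, c2, d2) = (a1 + a2, b1 + b2, c1 + c2, d1 + d2)"

fun quat_cnj :: "int_quat \<Rightarrow> int_quat" where
  "quat_cnj (a, b, c, d) = (a, -b, -c, -d)"

fun quat_norm :: "int_quat \<Rightarrow> int" where
  "quat_norm (a, b, c, d) = a\<^sup>2 + b\<^sup>2 + c\<^sup>2 + d\<^sup>2"

fun quat_scale :: "int \<Rightarrow> int_quat \<Rightarrow> int_quat" where
  "quat_scale k (a, b, c, d) = (k * a, k * b, k * c, k * d)"

fun quat_dvd :: "int \<Rightarrow> int_quat \<Rightarrow> bool" where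
  "quat_dvd k (a, b, c, d) \<longleftrightarrow> k dvd a \<and> k dvd b \<and> k dvd c \<and> k dvd d"

fun quat_div :: "int \<Rightarrow> int_quat \<Rightarrow> int_quat" where
  "quat_div k (a, b, c, d) = (a div k, b div k, c div k, d div k)"

fun quat_mod :: "int \<Rightarrow> int_quat \<Rightarrow> int_quat" where
  "quat_mod k (a, b, c, d) = (a mod k, b mod k, c mod k, d mod k)"

lemma quat_norm_mult: "quat_norm (quat_mult x y) = quat_norm x * quat_norm y"
  by (cases x; cases y) (simp add: power2_eq_square algebra_simps)

lemma quat_mult_mult_cnj: "quat_mult (quat_mult x y) (quat_cnj y) = quat_scale (quat_norm y) x"
  by (cases x; cases y) (simp add: power2_eq_square algebra_simps)

lemma quat_mult_cnj_mult: "quat_mult (quat_mult x (quat_cnj y)) y = quat_scale (quat_norm y) x"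
  by (cases x; cases y) (simp add: power2_eq_square algebra_simps)

lemma quat_mult_scale_left: "quat_mult (quat_scale k x) y = quat_scale k (quat_mult x y)"
  by (cases x; cases y) (simp add: algebra_simps)

lemma quat_mult_add_left: "quat_mult (quat_add x y) z = quat_add (quat_mult x z) (quat_mult y z)"
  by (cases x; cases y; cases z) (simp add: algebra_simps)

lemma quat_norm_scale: "quat_norm (quat_scale k x) = k\<^sup>2 * quat_norm x"
  by (cases x) (simp add: power2_eq_square algebra_simps)

lemma quat_norm_cnj: "quat_norm (quat_cnj x) = quat_norm x"
  by (cases x) simp

lemma quat_norm_nonneg: "quat_norm x \<ge> 0"
  by (cases x) simp

lemma quat_scale_inject: "k \<noteq> 0 \<Longrightarrow> quat_scale k x = quat_scale k y \<longleftrightarrow> x = y"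
  by (cases x; cases y) simp

lemma quat_scale_div: "quat_dvd k x \<Longrightarrow> quat_scale k (quat_div k x) = x"
  by (cases x) (simp add: dvd_mult_div_cancel)

lemma quat_dvd_scale: "quat_dvd k (quat_scale k x)"
  by (cases x) simp

lemma quat_dvd_mult_left: "quat_dvd k x \<Longrightarrow> quat_dvd k (quat_mult x y)"
  by (metis quat_scale_div quat_dvd_scale quat_mult_scale_left)

lemma quat_dvd_add_scale: "quat_dvd k (quat_add x (quat_scale k y)) \<longleftrightarrow> quat_dvd k x"
  by (cases x; cases y) (simp add: dvd_add_times_triv_right_iff mult.commute)

lemma quat_mod_add_div: "quat_add (quat_mod k x) (quat_scale k (quat_div k x)) = x"
  by (cases x) simp

lemma quat_dvd_mult_mod: "quat_dvd k (quat_mult (quat_mod k x) y) \<longleftrightarrow> quat_dvd k (quat_mult x y)"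
  by (metis quat_mod_add_div quat_mult_add_left quat_mult_scale_left quat_dvd_add_scale)

lemma quat_norm_mod: "quat_norm (quat_mod k x) mod k = quat_norm x mod k"
  by (cases x) (simp only: quat_mod.simps quat_norm.simps, intro mod_add_cong; simp add: power_mod)

definition four_square_reps :: "int \<Rightarrow> int_quat set" where
  "four_square_reps n = {x. quat_norm x = n}"

text \<open>\<open>p\<close> is a right divisor of \<open>y\<close>, i.e. \<open>y = x p\<close> for an integral \<open>x\<close>, iff \<open>N(p)\<close> divides
  \<open>y p\<^sup>*\<close>, because \<open>x p p\<^sup>* = N(p) x\<close>.\<close>

definition quat_right_divisors :: "int \<Rightarrow> int_quat \<Rightarrow> int_quat set" where
  "quat_right_divisors k y = {p \<in> four_square_reps k. quat_dvd k (quat_mult y (quat_cnj p))}"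

lemma four_square_reps_subset: "four_square_reps n \<subseteq> {-n..n} \<times> {-n..n} \<times> {-n..n} \<times> {-n..n}"
proof
  fix x assume "x \<in> four_square_reps n"
  then obtain a b c d where x: "x = (a, b, c, d)" "a\<^sup>2 + b\<^sup>2 + c\<^sup>2 + d\<^sup>2 = n"
    by (cases x) (auto simp: four_square_reps_def)
  have bound: "\<bar>t\<bar> \<le> n" if "t \<in> {a, b, c, d}" for t
  proof -
    have "t\<^sup>2 \<le> n"
      using that x(2) zero_le_power2[of a] zero_le_power2[of b] zero_le_power2[of c]
        zero_le_power2[of d] by auto
    with abs_le_square[of t] show ?thesis by linarith
  qed
  then have "\<bar>a\<bar> \<le> n" "\<bar>b\<bar> \<le> n" "\<bar>c\<bar> \<le> n" "\<bar>d\<bar> \<le> n"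
    by simp_all
  with x(1) show "x \<in> {-n..n} \<times> {-n..n} \<times> {-n..n} \<times> {-n..n}"
    by (simp add: abs_le_iff)
qed

lemma finite_four_square_reps: "finite (four_square_reps n)"
  by (rule finite_subset[OF four_square_reps_subset]) auto

lemma quat_div_mult_mult_cnj:
  assumes "quat_norm p \<noteq> 0"
  shows "quat_div (quat_norm p) (quat_mult (quat_mult x p) (quat_cnj p)) = x"
proof -
  have "quat_scale (quat_norm p) (quat_div (quat_norm p) (quat_scale (quat_norm p) x)) =
      quat_scale (quat_norm p) x"
    by (rule quat_scale_div[OF quat_dvd_scale])
  with assms show ?thesis by (simp add: quat_mult_mult_cnj quat_scale_inject)
qed

lemma quat_mult_div_mult_cnj:
  assumes "quat_norm p \<noteq> 0" "quat_dvd (quat_norm p) (quat_mult y (quat_cnj p))"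
  shows "quat_mult (quat_div (quat_norm p) (quat_mult y (quat_cnj p))) p = y"
proof -
  have "quat_scale (quat_norm p) (quat_mult (quat_div (quat_norm p) (quat_mult y (quat_cnj p))) p) =
      quat_scale (quat_norm p) y"
    using assms(2) by (simp add: quat_scale_div quat_mult_cnj_mult flip: quat_mult_scale_left)
  with assms(1) show ?thesis by (simp add: quat_scale_inject)
qed

lemma quat_norm_div_mult_cnj:
  assumes "quat_norm p \<noteq> 0" "quat_dvd (quat_norm p) (quat_mult y (quat_cnj p))"
  shows "quat_norm p * quat_norm (quat_div (quat_norm p) (quat_mult y (quat_cnj p))) = quat_norm y"
proof -
  let ?x = "quat_div (quat_norm p) (quat_mult y (quat_cnj p))"
  have "quat_norm p * (quat_norm p * quat_norm ?x) = quat_norm (quat_scale (quat_norm p) ?x)"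
    by (simp add: quat_norm_scale power2_eq_square)
  also have "\<dots> = quat_norm p * quat_norm y"
    using assms(2) by (simp add: quat_scale_div quat_norm_mult quat_norm_cnj)
  finally show ?thesis using assms(1) by simp
qed

lemma quat_mult_bij_right_divisors:
  assumes "k \<noteq> 0"
  shows "bij_betw (\<lambda>(x, p). (quat_mult x p, p)) (four_square_reps m \<times> four_square_reps k)
           (SIGMA y:four_square_reps (k * m). quat_right_divisors k y)"
    (is "bij_betw ?f ?A ?B")
proof (rule bij_betwI[where g = "\<lambda>(y, p). (quat_div k (quat_mult y (quat_cnj p)), p)"])
  show "?f \<in> ?A \<rightarrow> ?B"
  proof
    fix xp assume "xp \<in> ?A"
    then obtain x p where "xp = (x, p)" "quat_norm x = m" "quat_norm p = k"
      by (auto simp: four_square_reps_def)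
    then show "?f xp \<in> ?B"
      by (simp add: four_square_reps_def quat_right_divisors_def quat_norm_mult quat_mult_mult_cnj
          quat_dvd_scale mult.commute)
  qed
  show "(\<lambda>(y, p). (quat_div k (quat_mult y (quat_cnj p)), p)) \<in> ?B \<rightarrow> ?A"
  proof
    fix yp assume "yp \<in> ?B"
    then obtain y p where "yp = (y, p)" "quat_norm y = k * m" "quat_norm p = k"
        "quat_dvd k (quat_mult y (quat_cnj p))"
      by (auto simp: four_square_reps_def quat_right_divisors_def)
    with assms quat_norm_div_mult_cnj[of p y]
    show "(\<lambda>(y, p). (quat_div k (quat_mult y (quat_cnj p)), p)) yp \<in> ?A"
      by (simp add: four_square_reps_def)
  qed
  fix xp yp :: "int_quat \<times> int_quat"
  obtain x p where xp: "xp = (x, p)" by (cases xp)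
  then show "xp \<in> ?A \<Longrightarrow> (\<lambda>(y, p). (quat_div k (quat_mult y (quat_cnj p)), p)) (?f xp) = xp"
    using assms quat_div_mult_mult_cnj[of p x] by (simp add: four_square_reps_def)
  obtain y q where yq: "yp = (y, q)" by (cases yp)
  then show "yp \<in> ?B \<Longrightarrow> ?f ((\<lambda>(y, p). (quat_div k (quat_mult y (quat_cnj p)), p)) yp) = yp"
    using assms quat_mult_div_mult_cnj[of q y]
    by (simp add: four_square_reps_def quat_right_divisors_def)
qed

definition norm5_quats :: "int_quat list" where
  "norm5_quats = filter (\<lambda>p. quat_norm p = 5)
     (List.product [-2..2] (List.product [-2..2] (List.product [-2..2] [-2..2])))"

definition primitive_residues5 :: "int_quat list" where
  "primitive_residues5 = filter (\<lambda>y. 5 dvd quat_norm y \<and> y \<noteq> (0, 0, 0, 0))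
     (List.product [0..4] (List.product [0..4] (List.product [0..4] [0..4])))"

lemma length_norm5_quats: "length norm5_quats = 48"
  by code_simp

lemma distinct_norm5_quats: "distinct norm5_quats"
  by code_simp

text \<open>A quaternion \<open>y \<not>\<equiv> 0 (mod 5)\<close> with \<open>5 | N(y)\<close> has a right divisor of norm 5 that is unique
  up to the 8 units \<open>\<plusminus>1, \<plusminus>i, \<plusminus>j, \<plusminus>k\<close>; by \<open>quat_dvd_mult_mod\<close> this need only be checked on
  residues mod 5.\<close>

lemma primitive_residues5_right_divisors:
  "list_all (\<lambda>y. length (filter (\<lambda>p. quat_dvd 5 (quat_mult y (quat_cnj p))) norm5_quats) = 8)
     primitive_residues5"
  by code_simp

lemma abs_le_2_if_square_le_5:
  assumes "t\<^sup>2 \<le> (5 :: int)"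
  shows "\<bar>t\<bar> \<le> 2"
proof (rule ccontr)
  assume "\<not> \<bar>t\<bar> \<le> 2"
  then have "3\<^sup>2 \<le> \<bar>t\<bar>\<^sup>2" by (intro power_mono) auto
  with assms show False by simp
qed

lemma four_square_reps_5: "four_square_reps 5 = set norm5_quats"
proof (intro set_eqI iffI)
  fix p assume "p \<in> four_square_reps 5"
  then obtain a b c d where p: "p = (a, b, c, d)" "a\<^sup>2 + b\<^sup>2 + c\<^sup>2 + d\<^sup>2 = 5"
    by (cases p) (simp add: four_square_reps_def)
  then have "a\<^sup>2 \<le> 5" "b\<^sup>2 \<le> 5" "c\<^sup>2 \<le> 5" "d\<^sup>2 \<le> 5"
    using zero_le_power2[of a] zero_le_power2[of b] zero_le_power2[of c] zero_le_power2[of d]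
    by linarith+
  then have "\<bar>a\<bar> \<le> 2" "\<bar>b\<bar> \<le> 2" "\<bar>c\<bar> \<le> 2" "\<bar>d\<bar> \<le> 2"
    by (simp_all add: abs_le_2_if_square_le_5)
  with p show "p \<in> set norm5_quats"
    unfolding norm5_quats_def set_filter set_product set_upto by (simp add: abs_le_iff)
qed (auto simp: norm5_quats_def four_square_reps_def)

lemma card_four_square_reps_5: "card (four_square_reps 5) = 48"
  using length_norm5_quats distinct_norm5_quats by (simp add: four_square_reps_5 distinct_card)

lemma quat_mod_5_primitive:
  assumes "5 dvd quat_norm y" "\<not> quat_dvd 5 y"
  shows "quat_mod 5 y \<in> set primitive_residues5"
proof -
  obtain a b c d where y: "y = (a, b, c, d)" by (cases y)
  have "5 dvd quat_norm (quat_mod 5 y)"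
    using assms(1) quat_norm_mod[of 5 y] by (simp add: dvd_eq_mod_eq_0)
  moreover have "quat_mod 5 y \<noteq> (0, 0, 0, 0)"
    using assms(2) y by (auto simp: dvd_eq_mod_eq_0)
  moreover have "t mod 5 \<in> {0..4}" for t :: int
    using pos_mod_bound[of 5 t] by simp
  then have "quat_mod 5 y \<in> {0..4} \<times> {0..4} \<times> {0..4} \<times> {0..4}"
    using y by simp
  ultimately show ?thesis
    unfolding primitive_residues5_def set_filter set_product set_upto by simp
qed

lemma card_right_divisors_5_primitive:
  assumes "5 dvd quat_norm y" "\<not> quat_dvd 5 y"
  shows "card (quat_right_divisors 5 y) = 8"
proof -
  let ?ps = "filter (\<lambda>p. quat_dvd 5 (quat_mult (quat_mod 5 y) (quat_cnj p))) norm5_quats"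
  have "quat_right_divisors 5 y = set ?ps"
    by (auto simp: quat_right_divisors_def four_square_reps_5 quat_dvd_mult_mod)
  moreover have "length ?ps = 8"
    using primitive_residues5_right_divisors quat_mod_5_primitive[OF assms]
    by (simp add: list_all_iff)
  ultimately show ?thesis
    by (simp only: distinct_card[OF distinct_filter[OF distinct_norm5_quats]])
qed

lemma card_right_divisors_5_dvd:
  "quat_dvd 5 y \<Longrightarrow> card (quat_right_divisors 5 y) = 48"
  using card_four_square_reps_5 quat_dvd_mult_left
  by (simp add: quat_right_divisors_def)

theorem card_four_square_reps_5_mult_cong:
  "5 dvd int (card (four_square_reps (5 * m))) - int (card (four_square_reps m))"
proof -
  define D where "D = {y \<in> four_square_reps (5 * m). quat_dvd 5 y}"
  define P where "P = {y \<in> four_square_reps (5 * m). \<not> quat_dvd 5 y}"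
  have fin: "finite D" "finite P"
    using finite_four_square_reps by (auto simp: D_def P_def)
  have split: "four_square_reps (5 * m) = D \<union> P" "D \<inter> P = {}"
    by (auto simp: D_def P_def)
  have "card (four_square_reps m) * 48 =
      card (SIGMA y:four_square_reps (5 * m). quat_right_divisors 5 y)"
    using bij_betw_same_card[OF quat_mult_bij_right_divisors[of 5 m]]
    by (simp add: card_cartesian_product card_four_square_reps_5)
  also have "\<dots> = (\<Sum>y\<in>four_square_reps (5 * m). card (quat_right_divisors 5 y))"
    using finite_four_square_reps by (intro card_SigmaI) (auto simp: quat_right_divisors_def)
  also have "\<dots> = (\<Sum>y\<in>D. card (quat_right_divisors 5 y)) + (\<Sum>y\<in>P. card (quat_right_divisors 5 y))"
    unfolding split using fin split(2) by (rule sum.union_disjoint)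
  also have "\<dots> = 48 * card D + 8 * card P"
    by (simp add: D_def P_def four_square_reps_def card_right_divisors_5_dvd
        card_right_divisors_5_primitive)
  finally have "card (four_square_reps m) * 48 = 48 * card D + 8 * card P" .
  moreover have "card (four_square_reps (5 * m)) = card D + card P"
    unfolding split using fin split(2) by (rule card_Un_disjoint)
  ultimately show ?thesis by presburger
qed

section \<open>Numbers that are not sums of two or three squares\<close>

lemma square_mod_4: "(a::int)\<^sup>2 mod 4 = (if even a then 0 else 1)"
proof (cases "even a")
  case True
  then obtain k where "a = 2 * k" by blast
  then show ?thesis by (simp add: power2_eq_square)
next
  case False
  then obtain k where "a = 2 * k + 1" using oddE by blast
  then have "a\<^sup>2 = 1 + 4 * (k\<^sup>2 + k)" by (simp add: power2_eq_square algebra_simps)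
  then have "a\<^sup>2 mod 4 = 1" by (simp only: mod_mult_self2) simp
  with False show ?thesis by simp
qed

lemma square_mod_8: "(a::int)\<^sup>2 mod 8 \<in> {0, 1, 4}"
proof -
  have "a\<^sup>2 mod 8 = (a mod 8)\<^sup>2 mod 8" by (simp add: power_mod)
  moreover have "a mod 8 \<in> {0, 1, 2, 3, 4, 5, 6, 7}" by auto
  ultimately show ?thesis by auto
qed

lemma mod_add3_eq: "((x::int) mod m + y mod m + z mod m) mod m = (x + y + z) mod m"
proof -
  have "(x mod m + y mod m + z mod m) mod m = ((x mod m + y mod m) mod m + z mod m) mod m"
    by (rule mod_add_left_eq[symmetric])
  also have "\<dots> = (x + y + z) mod m"
    by (simp add: mod_add_eq)
  finally show ?thesis .
qed

lemma even_if_sum_three_squares_div_4: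
  assumes "4 dvd (a::int)\<^sup>2 + b\<^sup>2 + c\<^sup>2"
  shows "even a" "even b" "even c"
proof -
  have "(a\<^sup>2 + b\<^sup>2 + c\<^sup>2) mod 4 = 0"
    using assms by (simp only: dvd_eq_mod_eq_0)
  then have "(a\<^sup>2 mod 4 + b\<^sup>2 mod 4 + c\<^sup>2 mod 4) mod 4 = 0"
    by (simp only: mod_add3_eq)
  then show "even a" "even b" "even c"
    unfolding square_mod_4 by (cases "even a"; cases "even b"; cases "even c"; simp)+
qed

lemma sum_three_squares_4_power:
  assumes "(a::int)\<^sup>2 + b\<^sup>2 + c\<^sup>2 = 4 ^ k * m"
  obtains a' b' c' where "a'\<^sup>2 + b'\<^sup>2 + c'\<^sup>2 = m" "c = 2 ^ k * c'"
  using assms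
proof (induction k arbitrary: a b c thesis)
  case (Suc k)
  then have "4 dvd a\<^sup>2 + b\<^sup>2 + c\<^sup>2" by simp
  then obtain a1 b1 c1 where "a = 2 * a1" "b = 2 * b1" "c = 2 * c1"
    using even_if_sum_three_squares_div_4 by (metis evenE)
  with Suc.prems(2) have "a1\<^sup>2 + b1\<^sup>2 + c1\<^sup>2 = 4 ^ k * m"
    by (simp add: power2_eq_square algebra_simps)
  then have "\<exists>a' b' c'. a'\<^sup>2 + b'\<^sup>2 + c'\<^sup>2 = m \<and> c1 = 2 ^ k * c'"
    using Suc.IH[where a = a1 and b = b1 and c = c1] by blast
  then obtain a' b' c' where "a'\<^sup>2 + b'\<^sup>2 + c'\<^sup>2 = m" "c1 = 2 ^ k * c'" by blast
  with \<open>c = 2 * c1\<close> show ?case by (intro Suc.prems(1)) auto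
qed simp

lemma not_sum_three_squares:
  assumes "m mod 8 = 7"
  shows "(a::int)\<^sup>2 + b\<^sup>2 + c\<^sup>2 \<noteq> 4 ^ k * m"
proof
  assume "a\<^sup>2 + b\<^sup>2 + c\<^sup>2 = 4 ^ k * m"
  then obtain a' b' c' where "a'\<^sup>2 + b'\<^sup>2 + c'\<^sup>2 = m"
    by (rule sum_three_squares_4_power)
  then have "(a'\<^sup>2 mod 8 + b'\<^sup>2 mod 8 + c'\<^sup>2 mod 8) mod 8 = 7"
    using assms by (simp only: mod_add3_eq)
  with square_mod_8[of a'] square_mod_8[of b'] square_mod_8[of c'] show False
    by auto
qed

lemma not_sum_two_squares:
  assumes "m mod 4 = 3"
  shows "(a::int)\<^sup>2 + b\<^sup>2 \<noteq> 4 ^ k * m"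
proof
  assume "a\<^sup>2 + b\<^sup>2 = 4 ^ k * m"
  then obtain a' b' c' where "a'\<^sup>2 + b'\<^sup>2 + c'\<^sup>2 = m" "0 = 2 ^ k * c'"
    using sum_three_squares_4_power[of a b 0 k m] by auto
  then have "a'\<^sup>2 + b'\<^sup>2 = m" by simp
  then have "(a'\<^sup>2 mod 4 + b'\<^sup>2 mod 4) mod 4 = 3"
    using assms by (simp only: mod_add_eq)
  then show False
    unfolding square_mod_4 by (cases "even a'"; cases "even b'"; simp)
qed

lemma theta_term_mult4:
  "theta_term a * (theta_term b * (theta_term c * theta_term d)) =
     fps_const (neg1_pow (quat_norm (a, b, c, d))) * fps_X ^ nat (quat_norm (a, b, c, d))"
proof -
  have "theta_term a * (theta_term b * (theta_term c * theta_term d)) =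
      fps_const (neg1_pow a * (neg1_pow b * (neg1_pow c * neg1_pow d))) *
      fps_X ^ (nat (a\<^sup>2) + (nat (b\<^sup>2) + (nat (c\<^sup>2) + nat (d\<^sup>2))))"
    by (simp add: theta_term_def power_add algebra_simps)
  also have "neg1_pow a * (neg1_pow b * (neg1_pow c * neg1_pow d)) = neg1_pow (quat_norm (a, b, c, d))"
    by (simp only: quat_norm.simps neg1_pow_add neg1_pow_square)
  also have "nat (a\<^sup>2) + (nat (b\<^sup>2) + (nat (c\<^sup>2) + nat (d\<^sup>2))) = nat (quat_norm (a, b, c, d))"
    by (simp add: nat_add_distrib)
  finally show ?thesis .
qed

lemma theta_power4_nth: "(theta ^ 4) $ n = neg1_pow (int n) * int (card (four_square_reps (int n)))"
proof -
  define I where "I = {-int n..int n}"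
  have "fps_cong_upto (Suc n) 0 (theta ^ 4) (theta_partial n ^ 4)"
    by (intro fps_cong_upto_power theta_cong_upto_partial)
  then have "(theta ^ 4) $ n = (theta_partial n ^ 4) $ n"
    by (simp add: fps_cong_upto_0_iff)
  also have "theta_partial n ^ 4 =
      (\<Sum>x\<in>I \<times> I \<times> I \<times> I. fps_const (neg1_pow (quat_norm x)) * fps_X ^ nat (quat_norm x))"
  proof -
    let ?S = "\<Sum>j\<in>I. theta_term j"
    have "theta_partial n ^ 4 = ?S * (?S * (?S * ?S))"
      by (simp add: theta_partial_def I_def eval_nat_numeral)
    also have "\<dots> =
        (\<Sum>a\<in>I. \<Sum>b\<in>I. \<Sum>c\<in>I. \<Sum>d\<in>I. theta_term a * (theta_term b * (theta_term c * theta_term d)))"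
      by (simp add: sum_distrib_left[symmetric] sum_distrib_right[symmetric])
    also have "\<dots> = (\<Sum>x\<in>I \<times> I \<times> I \<times> I.
        case x of (a, b, c, d) \<Rightarrow> theta_term a * (theta_term b * (theta_term c * theta_term d)))"
      by (simp add: sum.cartesian_product case_prod_beta)
    finally show ?thesis
      by (simp only: theta_term_mult4 split_def) (simp add: case_prod_beta)
  qed
  also have "\<dots> $ n = (\<Sum>x | x \<in> I \<times> I \<times> I \<times> I \<and> nat (quat_norm x) = n. neg1_pow (quat_norm x))"
    by (rule fps_nth_sum_monomials) (simp add: I_def)
  also have "{x. x \<in> I \<times> I \<times> I \<times> I \<and> nat (quat_norm x) = n} = four_square_reps (int n)"
    using four_square_reps_subset[of "int n"] quat_norm_nonneg
    by (auto simp: four_square_reps_def I_def)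
  also have "(\<Sum>x\<in>four_square_reps (int n). neg1_pow (quat_norm x)) =
      (\<Sum>x\<in>four_square_reps (int n). neg1_pow (int n))"
    by (simp add: four_square_reps_def)
  finally show ?thesis by simp
qed

lemma theta_power4_decimate_cong: "fps_cong 5 (fps_decimate 5 (theta ^ 4)) (theta ^ 4)"
  unfolding fps_cong_def fps_decimate_def
proof
  fix m
  have "neg1_pow (int (5 * m)) = neg1_pow (int m)" by (simp add: neg1_pow_def)
  then have "(theta ^ 4) $ (5 * m) - (theta ^ 4) $ m =
      neg1_pow (int m) * (int (card (four_square_reps (5 * int m))) - int (card (four_square_reps (int m))))"
    by (simp add: theta_power4_nth algebra_simps)
  then show "5 dvd Abs_fps (\<lambda>n. (theta ^ 4) $ (5 * n)) $ m - (theta ^ 4) $ m"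
    using card_four_square_reps_5_mult_cong[of "int m"] by simp
qed

lemma overpartition_count_mod_8:
  assumes "n > 0" "\<nexists>a b. a\<^sup>2 + b\<^sup>2 = int n"
  shows "8 dvd overpartition_count n"
proof -
  define Y where "Y = Abs_fps (\<lambda>k. if k = 0 then 0 else theta_coeff k div 2)"
  have theta: "theta = 1 + 2 * Y"
    by (rule fps_ext) (simp add: Y_def theta_def theta_coeff_0 theta_coeff_even fps_numeral_fps_const)
  have Y_support: "Y $ k \<noteq> 0 \<Longrightarrow> \<exists>j. j\<^sup>2 = int k" for k
    using theta_nth_nonzero[of k] by (auto simp: Y_def theta_def split: if_splits)
  have "1 - 2 * Y + 4 * Y\<^sup>2 = overpartition_fps * theta * (1 - 2 * Y + 4 * Y\<^sup>2)"
    by (simp add: overpartition_fps_mult_theta)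
  also have "\<dots> = overpartition_fps + 8 * (Y ^ 3 * overpartition_fps)"
    unfolding theta by (simp add: algebra_simps power2_eq_square power3_eq_cube)
  finally have "overpartition_fps $ n = (1 - 2 * Y + 4 * Y\<^sup>2) $ n - 8 * (Y ^ 3 * overpartition_fps) $ n"
    by (simp add: fps_numeral_fps_const)
  moreover have "Y $ n = 0"
    using Y_support[of n] assms(2) by (metis add.right_neutral zero_power2)
  moreover have "(Y\<^sup>2) $ n = 0"
    using square_supported_power2_nth_nonzero[OF Y_support] assms(2) by blast
  ultimately have "int (overpartition_count n) = - 8 * (Y ^ 3 * overpartition_fps) $ n"
    using assms(1) by (simp add: overpartition_fps_def fps_numeral_fps_const)
  then show ?thesis by presburger
qed

lemma overpartition_count_5_mult_cong:
  "5 dvd int (overpartition_count (5 * m)) - (theta ^ 3) $ m"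
proof -
  define U where "U = fps_decimate 5 overpartition_fps"
  have "fps_cong 5 (fps_dilate 5 theta * overpartition_fps) (theta ^ 5 * overpartition_fps)"
    by (intro fps_cong_mult fps_cong_refl fps_cong_sym[OF theta_power5_cong])
  moreover have "theta ^ 5 * overpartition_fps = theta ^ 4"
    using theta_mult_overpartition_fps by (simp add: eval_nat_numeral algebra_simps)
  moreover have "theta * U = fps_decimate 5 (fps_dilate 5 theta * overpartition_fps)"
    by (simp add: U_def fps_decimate_dilate_mult)
  ultimately have "fps_cong 5 (theta * U) (fps_decimate 5 (theta ^ 4))"
    by (simp add: fps_cong_decimate)
  then have "fps_cong 5 (theta * U) (theta ^ 4)"
    using theta_power4_decimate_cong by (rule fps_cong_trans)
  then have "fps_cong 5 (overpartition_fps * (theta * U)) (overpartition_fps * theta ^ 4)"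
    by (intro fps_cong_mult fps_cong_refl)
  moreover have "overpartition_fps * (theta * U) = U" "overpartition_fps * theta ^ 4 = theta ^ 3"
    using overpartition_fps_mult_theta by (simp_all add: mult.assoc[symmetric] eval_nat_numeral)
  ultimately have "fps_cong 5 U (theta ^ 3)"
    by simp
  then show ?thesis
    by (simp add: fps_cong_def U_def fps_decimate_def overpartition_fps_def)
qed

theorem theorem2:
  fixes n \<alpha> :: nat
  shows "overpartition_count (4 ^ \<alpha> * (40 * n + 35)) mod 40 = 0"
proof -
  define m where "m = 4 ^ \<alpha> * (8 * n + 7)"
  have N: "4 ^ \<alpha> * (40 * n + 35) = 5 * m" by (simp add: m_def)
  have "int (5 * m) = 4 ^ \<alpha> * (40 * int n + 35)" "(40 * int n + 35) mod 4 = 3"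
    by (simp add: m_def, presburger)
  then have "a\<^sup>2 + b\<^sup>2 \<noteq> int (5 * m)" for a b
    using not_sum_two_squares by metis
  then have "8 dvd overpartition_count (5 * m)"
    by (intro overpartition_count_mod_8) (auto simp: m_def)
  have "int m = 4 ^ \<alpha> * (8 * int n + 7)" "(8 * int n + 7) mod 8 = 7"
    by (simp add: m_def, presburger)
  then have "a\<^sup>2 + b\<^sup>2 + c\<^sup>2 \<noteq> int m" for a b c
    using not_sum_three_squares by metis
  then have "(theta ^ 3) $ m = 0"
    using square_supported_power3_nth_nonzero[of theta m] theta_nth_nonzero by blast
  with \<open>8 dvd overpartition_count (5 * m)\<close> overpartition_count_5_mult_cong[of m] have "40 dvd overpartition_count (5 * m)"
    by presburger
  then show ?thesis by (simp add: N)
qed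

end
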